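(* There exist parameter classes $\Phi,\Psi$ and ground truth $\phi^*\in\Phi,\psi^*\in\Psi$ (with $x,y,z$ taking values in the positive integers and no side information) such that for every constant $c>0$ there exist $m,n\ge c$ for which, with probability at least $\frac12(1-e^{-1})e^{-1}$, the output $(\hat\phi,\hat\psi)$ of the two-phase MLE algorithm satisfies $$d_{\mathrm{TV}}\big(\mathbb P_{\hat\phi,\hat\psi}(x,y),\mathbb P_{\phi^*,\psi^*}(x,y)\big)\ge\frac18.$$
   Context: Setup: $\Phi$ indexes joint distributions $\mathbb P_\phi(x,z)$ and $\Psi$ indexes conditional distributions $\mathbb P_\psi(y\mid z)$; $\mathbb P_{\phi,\psi}(x,y)=\sum_z\mathbb P_\phi(x,z)\mathbb P_\psi(y\mid z)$. Data: $m$ i.i.d. unlabeled $x_i\sim\mathbb P_{\phi^*}(x)$ and independent $n$ i.i.d. labeled $(x_j,y_j)\sim\mathbb P_{\phi^*,\psi^*}(x,y)$. Two-phase MLE algorithm: $\hat\phi\in\arg\max_{\phi\in\Phi}\sum_{i=1}^m\log p_\phi(x_i)$, then $\hat\psi\in\arg\max_{\psi\in\Psi}\sum_{j=1}^n\log p_{\hat\phi,\psi}(x_j,y_j)$. $d_{\mathrm{TV}}(P,Q)=\frac12\sum|p-q|$. *)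

theory Defs
  imports "HOL-Probability.Probability"
begin

definition joint_xy :: "(nat \<times> nat) pmf \<Rightarrow> (nat \<Rightarrow> nat pmf) \<Rightarrow> (nat \<times> nat) pmf" where
  "joint_xy \<phi> \<psi> = bind_pmf \<phi> (\<lambda>(x, z). map_pmf (\<lambda>y. (x, y)) (\<psi> z))"

definition marg_x :: "(nat \<times> nat) pmf \<Rightarrow> nat pmf" where
  "marg_x \<phi> = map_pmf fst \<phi>"

definition elog :: "real \<Rightarrow> ereal" where
  "elog p = (if p = 0 then - \<infinity> else ereal (ln p))"

fun iid_pmf :: "nat \<Rightarrow> 'a pmf \<Rightarrow> 'a list pmf" where
  "iid_pmf 0 p = return_pmf []"
| "iid_pmf (Suc k) p = bind_pmf p (\<lambda>x. map_pmf (Cons x) (iid_pmf k p))"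

definition is_argmax_on :: "('a \<Rightarrow> ereal) \<Rightarrow> 'a set \<Rightarrow> 'a \<Rightarrow> bool" where
  "is_argmax_on f S a \<longleftrightarrow> a \<in> S \<and> (\<forall>b\<in>S. f b \<le> f a)"

definition loglik1 :: "nat list \<Rightarrow> (nat \<times> nat) pmf \<Rightarrow> ereal" where
  "loglik1 xs \<phi> = (\<Sum>i<length xs. elog (pmf (marg_x \<phi>) (xs ! i)))"

definition loglik2 :: "(nat \<times> nat) list \<Rightarrow> (nat \<times> nat) pmf \<Rightarrow> (nat \<Rightarrow> nat pmf) \<Rightarrow> ereal" where
  "loglik2 ps \<phi> \<psi> = (\<Sum>j<length ps. elog (pmf (joint_xy \<phi> \<psi>) (ps ! j)))"

definition mle1 :: "(nat \<times> nat) pmf set \<Rightarrow> nat list \<Rightarrow> (nat \<times> nat) pmf set" where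
  "mle1 \<Phi> xs = {\<phi>. is_argmax_on (loglik1 xs) \<Phi> \<phi>}"

definition mle2 :: "(nat \<Rightarrow> nat pmf) set \<Rightarrow> (nat \<times> nat) list \<Rightarrow> (nat \<times> nat) pmf \<Rightarrow> (nat \<Rightarrow> nat pmf) set" where
  "mle2 \<Psi> ps \<phi> = {\<psi>. is_argmax_on (loglik2 ps \<phi>) \<Psi> \<psi>}"

text \<open>All possible outputs of the two-phase MLE algorithm (any tie-breaking).\<close>
definition two_phase_outputs ::
  "(nat \<times> nat) pmf set \<Rightarrow> (nat \<Rightarrow> nat pmf) set \<Rightarrow> nat list \<Rightarrow> (nat \<times> nat) list
     \<Rightarrow> ((nat \<times> nat) pmf \<times> (nat \<Rightarrow> nat pmf)) set" where
  "two_phase_outputs \<Phi> \<Psi> xs ps = {(\<phi>, \<psi>). \<phi> \<in> mle1 \<Phi> xs \<and> \<psi> \<in> mle2 \<Psi> ps \<phi>}"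

definition two_phase_defined ::
  "(nat \<times> nat) pmf set \<Rightarrow> (nat \<Rightarrow> nat pmf) set \<Rightarrow> nat list \<Rightarrow> (nat \<times> nat) list \<Rightarrow> bool" where
  "two_phase_defined \<Phi> \<Psi> xs ps \<longleftrightarrow> mle1 \<Phi> xs \<noteq> {} \<and> (\<forall>\<phi>\<in>mle1 \<Phi> xs. mle2 \<Psi> ps \<phi> \<noteq> {})"

definition d_TV :: "'a pmf \<Rightarrow> 'a pmf \<Rightarrow> real" where
  "d_TV P Q = (1/2) * (\<Sum>\<^sub>\<infinity>a. \<bar>pmf P a - pmf Q a\<bar>)"

end

theory Submission
  imports Defs
begin

text \<open>
  The class \<open>\<Phi>\<close> contains the truth, a fair coin \<open>x \<in> {1, 2}\<close> whose latent \<open>z\<close> is \<open>1\<close>,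
  together with every coin whose latent is \<open>2\<close>; the label \<open>y\<close> simply copies \<open>z\<close>.
  Phase 1 sees only \<open>x\<close>, so its likelihood is the binomial likelihood of the coin bias,
  which by Gibbs' inequality is uniquely maximised at the empirical frequency of \<open>x = 1\<close>.
  For an odd number of samples this frequency is never \<open>1/2\<close>, so the maximiser is always a
  model with latent \<open>2\<close>. Phase 2 has only the copying model to choose, so the estimate
  predicts \<open>y = 2\<close> where the truth has \<open>y = 1\<close>. Hence the algorithm fails with probability one.
\<close>

lemma ln_less_minus_one:
  fixes x :: real
  assumes "0 < x" "x \<noteq> 1"
  shows "ln x < x - 1"
proof -
  have s: "0 < sqrt x" "sqrt x \<noteq> 1" using assms by auto
  have "ln x = 2 * ln (sqrt x)" using assms by (simp add: ln_sqrt)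
  also have "\<dots> \<le> 2 * (sqrt x - 1)" using ln_le_minus_one[OF s(1)] by simp
  also have "\<dots> < x - 1"
  proof -
    have "0 < (sqrt x - 1)^2" using s by simp
    also have "(sqrt x - 1)^2 = x - 2 * sqrt x + 1"
      using assms by (simp add: power2_eq_square algebra_simps)
    finally show ?thesis by simp
  qed
  finally show ?thesis .
qed

lemma binary_gibbs_strict:
  fixes a b q :: real
  assumes a: "0 < a" and b: "0 < b" and q: "0 < q" "q < 1" and ne: "q \<noteq> a / (a + b)"
  shows "a * ln q + b * ln (1 - q) < a * ln (a / (a + b)) + b * ln (b / (a + b))"
proof -
  define p where "p = a / (a + b)"
  have p: "0 < p" "p < 1" and p': "1 - p = b / (a + b)"
    using a b by (auto simp: p_def field_simps)
  have "a * ln q + b * ln (1 - q) - (a * ln p + b * ln (1 - p))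
          = a * ln (q / p) + b * ln ((1 - q) / (1 - p))"
    using p q by (simp add: ln_div algebra_simps)
  also have "\<dots> < a * (q / p - 1) + b * ((1 - q) / (1 - p) - 1)"
  proof (intro add_less_le_mono mult_strict_left_mono mult_left_mono)
    show "ln (q / p) < q / p - 1"
      using p q ne by (intro ln_less_minus_one) (auto simp flip: p_def)
    show "ln ((1 - q) / (1 - p)) \<le> (1 - q) / (1 - p) - 1"
      using p q by (intro ln_le_minus_one) simp
  qed (use a b in auto)
  also have "\<dots> = 0"
    using a b by (simp add: p_def p' field_simps)
  finally show ?thesis unfolding p'[symmetric] p_def[symmetric] by simp
qed

definition binary_loglik :: "nat \<Rightarrow> nat \<Rightarrow> real \<Rightarrow> ereal" where
  "binary_loglik k l q = ereal (real k) * elog q + ereal (real l) * elog (1 - q)"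

lemma binary_loglik_swap: "binary_loglik k l q = binary_loglik l k (1 - q)"
  by (simp add: binary_loglik_def add.commute)

lemma binary_loglik_degenerate_strict:
  assumes "0 < l" "0 < q" "q \<le> 1"
  shows "binary_loglik 0 l q < binary_loglik 0 l 0"
proof -
  have "elog (1 - q) < 0"
    using assms by (auto simp: elog_def)
  then have "ereal (real l) * elog (1 - q) < 0"
    using assms(1) by (cases "elog (1 - q)") (auto simp: mult_pos_neg)
  then show ?thesis
    using assms(2) by (simp add: binary_loglik_def elog_def zero_ereal_def)
qed

lemma binary_loglik_strict_max:
  assumes kl: "0 < k + l" and q: "0 \<le> q" "q \<le> 1" and ne: "q \<noteq> real k / real (k + l)"
  shows "binary_loglik k l q < binary_loglik k l (real k / real (k + l))"
proof -
  consider "k = 0" | "l = 0" | "0 < k" "0 < l" by blast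
  then show ?thesis
  proof cases
    case 1
    then show ?thesis
      using kl q ne binary_loglik_degenerate_strict[of l q] by simp
  next
    case 2
    then show ?thesis
      using kl q ne binary_loglik_degenerate_strict[of k "1 - q"]
      by (simp add: binary_loglik_swap[of k 0])
  next
    case 3
    define a b where "a = real k" and "b = real l"
    have ab: "0 < a" "0 < b" "real (k + l) = a + b"
      using 3 by (simp_all add: a_def b_def)
    have top: "binary_loglik k l (a / (a + b))
        = ereal (a * ln (a / (a + b)) + b * ln (b / (a + b)))"
      using ab by (simp add: binary_loglik_def elog_def a_def b_def field_simps)
    consider "q = 0" | "q = 1" | "0 < q" "q < 1" using q by fastforce
    then show ?thesis
    proof cases
      case 1
      then show ?thesis using 3 top ab by (simp add: binary_loglik_def elog_def a_def)
    next
      case 2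
      then show ?thesis using 3 top ab by (simp add: binary_loglik_def elog_def a_def)
    next
      case 3
      then have "binary_loglik k l q = ereal (a * ln q + b * ln (1 - q))"
        by (simp add: binary_loglik_def elog_def a_def b_def)
      then show ?thesis
        using binary_gibbs_strict[OF ab(1,2) 3] ne top ab by (simp add: a_def)
    qed
  qed
qed

lemma binary_mle_ne_half:
  assumes "odd (k + l)"
  shows "real k / real (k + l) \<noteq> 1 / 2"
proof
  assume "real k / real (k + l) = 1 / 2"
  then have "real (k + l) = real (2 * k)"
    using assms by (cases "k + l = 0") (auto simp: field_simps)
  then have "k + l = 2 * k" by (simp only: of_nat_eq_iff)
  with assms show False by simp
qed

definition coin :: "real \<Rightarrow> nat pmf" where
  "coin q = map_pmf (\<lambda>b. if b then 1 else 2) (bernoulli_pmf q)"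

definition coin_at :: "real \<Rightarrow> nat \<Rightarrow> (nat \<times> nat) pmf" where
  "coin_at q z = map_pmf (\<lambda>x. (x, z)) (coin q)"

text \<open>The \<open>max 1\<close> only matters at \<open>z = 0\<close>, which no model in the class produces; it keeps
  every label positive.\<close>
definition copy_latent :: "nat \<Rightarrow> nat pmf" where
  "copy_latent z = return_pmf (max 1 z)"

lemma set_pmf_coin: "set_pmf (coin q) \<subseteq> {1, 2}"
  by (auto simp: coin_def)

lemma pmf_coin:
  assumes "0 \<le> q" "q \<le> 1"
  shows "pmf (coin q) 1 = q" and "pmf (coin q) 2 = 1 - q"
proof -
  have inj: "inj (\<lambda>b::bool. if b then (1::nat) else 2)"
    by (auto simp: inj_def split: if_splits)
  show "pmf (coin q) 1 = q" and "pmf (coin q) 2 = 1 - q"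
    using pmf_map_inj'[OF inj, of "bernoulli_pmf q" True]
      pmf_map_inj'[OF inj, of "bernoulli_pmf q" False] assms by (simp_all add: coin_def)
qed

lemma pmf_coin_at: "pmf (coin_at q z) (x, w) = (if w = z then pmf (coin q) x else 0)"
proof -
  have "inj (\<lambda>x. (x, z))" by (simp add: inj_def)
  then show ?thesis
    using pmf_map_inj'[of "\<lambda>x. (x, z)" "coin q" x]
    by (auto simp: coin_at_def pmf_eq_0_set_pmf)
qed

lemma set_pmf_coin_at: "set_pmf (coin_at q z) \<subseteq> {1, 2} \<times> {z}"
  using set_pmf_coin by (auto simp: coin_at_def)

lemma marg_x_coin_at: "marg_x (coin_at q z) = coin q"
  by (simp add: marg_x_def coin_at_def map_pmf_comp)

lemma joint_xy_coin_at_copy_latent: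
  "0 < z \<Longrightarrow> joint_xy (coin_at q z) copy_latent = coin_at q z"
  by (simp add: joint_xy_def coin_at_def copy_latent_def bind_map_pmf map_pmf_def[symmetric]
      map_pmf_comp o_def max_absorb2)

lemma pmf_summable_on: "pmf p summable_on A"
  using pmf_abs_summable[of p A] abs_summable_summable
  by (simp add: abs_summable_equivalent[symmetric])

lemma d_TV_ge_pmf_diff: "\<bar>pmf P a - pmf Q a\<bar> / 2 \<le> d_TV P Q"
proof -
  define f where "f = (\<lambda>b. \<bar>pmf P b - pmf Q b\<bar>)"
  have "f summable_on UNIV"
    using summable_on_add[OF pmf_summable_on[of P] pmf_summable_on[of Q]]
    by (rule summable_on_comparison_test) (auto simp: f_def abs_le_iff)
  then have "infsum f {a} \<le> infsum f UNIV"
    by (intro infsum_mono_neutral) (auto simp: f_def)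
  then show ?thesis
    by (simp add: d_TV_def f_def)
qed

lemma d_TV_coin_at_ge:
  assumes "z \<noteq> w" "0 \<le> r" "r \<le> 1"
  shows "r / 2 \<le> d_TV (coin_at q z) (coin_at r w)"
  using d_TV_ge_pmf_diff[of "coin_at q z" "(1, w)" "coin_at r w"] pmf_coin(1)[of r] assms
  by (simp add: pmf_coin_at)

lemma set_pmf_iid_pmf:
  "xs \<in> set_pmf (iid_pmf k p) \<Longrightarrow> length xs = k \<and> set xs \<subseteq> set_pmf p"
  by (induction k arbitrary: xs) fastforce+

lemma sum_list_two_values:
  fixes g :: "nat \<Rightarrow> ereal"
  assumes "set xs \<subseteq> {1, 2}"
  shows "sum_list (map g xs)
    = ereal (real (count_list xs 1)) * g 1 + ereal (real (count_list xs 2)) * g 2"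
  using assms
proof (induction xs)
  case Nil
  then show ?case by (simp flip: zero_ereal_def)
next
  case (Cons x xs)
  have succ: "ereal (1 + real c) * e = e + ereal (real c) * e" for c and e :: ereal
    by (cases e) (auto simp: algebra_simps)
  from Cons show ?case by (auto simp: succ add_ac)
qed

lemma loglik1_coin_at:
  assumes "set xs \<subseteq> {1, 2}" "0 \<le> q" "q \<le> 1"
  shows "loglik1 xs (coin_at q z) = binary_loglik (count_list xs 1) (count_list xs 2) q"
proof -
  have "loglik1 xs (coin_at q z) = sum_list (map (\<lambda>x. elog (pmf (coin q) x)) xs)"
    by (simp add: loglik1_def marg_x_coin_at sum_list_sum_nth atLeast0LessThan)
  also have "\<dots> = ereal (real (count_list xs 1)) * elog (pmf (coin q) 1)
                  + ereal (real (count_list xs 2)) * elog (pmf (coin q) 2)"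
    by (rule sum_list_two_values[OF assms(1)])
  finally show ?thesis
    using assms by (simp only: binary_loglik_def pmf_coin)
qed

lemma count_list_two_values:
  "set xs \<subseteq> {1, 2} \<Longrightarrow> count_list xs 1 + count_list xs 2 = length (xs :: nat list)"
  by (induction xs) auto

definition coin_class :: "(nat \<times> nat) pmf set" where
  "coin_class = insert (coin_at (1/2) 1) ((\<lambda>q. coin_at q 2) ` {0..1})"

lemma mle1_coin_class:
  assumes xs: "set xs \<subseteq> {1, 2}" and odd: "odd (length xs)"
  shows "mle1 coin_class xs = {coin_at (real (count_list xs 1) / real (length xs)) 2}"
proof -
  define k l where "k = count_list xs 1" and "l = count_list xs 2"
  define p where "p = real k / real (k + l)"
  have kl: "k + l = length xs"
    using count_list_two_values[OF xs] by (simp add: k_def l_def)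
  have p01: "0 \<le> p" "p \<le> 1"
    by (auto simp: p_def divide_le_eq_1)
  have ll: "loglik1 xs (coin_at q z) = binary_loglik k l q" if "0 \<le> q" "q \<le> 1" for q z
    using loglik1_coin_at[OF xs that] by (simp add: k_def l_def)
  have kl_pos: "0 < k + l"
    using odd kl by (cases "length xs") auto
  have strict: "loglik1 xs \<phi> < loglik1 xs (coin_at p 2)"
    if \<phi>: "\<phi> \<in> coin_class" "\<phi> \<noteq> coin_at p 2" for \<phi>
  proof -
    obtain q z where \<phi>_eq: "\<phi> = coin_at q z" and q: "0 \<le> q" "q \<le> 1" "q \<noteq> p"
      using \<phi> binary_mle_ne_half[of k l] odd kl by (fastforce simp: coin_class_def p_def)
    show ?thesis
      unfolding \<phi>_eq ll[OF q(1,2)] ll[OF p01]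
      using binary_loglik_strict_max[OF kl_pos q(1,2)] q(3) by (simp add: p_def)
  qed
  have "coin_at p 2 \<in> coin_class"
    using p01 by (simp add: coin_class_def)
  then have "mle1 coin_class xs = {coin_at p 2}"
    using strict by (force simp: mle1_def is_argmax_on_def order.order_iff_strict not_less)
  then show ?thesis
    unfolding p_def kl unfolding k_def .
qed

lemma mle2_singleton: "mle2 {\<psi>} ps \<phi> = {\<psi>}"
  by (auto simp: mle2_def is_argmax_on_def)

lemma two_phase_coin_class:
  assumes "set xs \<subseteq> {1, 2}" "odd (length xs)"
  defines "p \<equiv> real (count_list xs 1) / real (length xs)"
  shows "two_phase_defined coin_class {copy_latent} xs ps"
    and "two_phase_outputs coin_class {copy_latent} xs ps = {(coin_at p 2, copy_latent)}"
  using mle1_coin_class[OF assms(1,2)]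
  by (simp_all add: two_phase_defined_def two_phase_outputs_def mle2_singleton p_def)

lemma two_phase_mle_fails_on_odd_samples:
  assumes "odd m"
  shows "measure_pmf.prob
      (pair_pmf (iid_pmf m (marg_x (coin_at (1/2) 1)))
                (iid_pmf n (joint_xy (coin_at (1/2) 1) copy_latent)))
      {(xs, ps). two_phase_defined coin_class {copy_latent} xs ps \<and>
         (\<forall>(\<phi>h, \<psi>h) \<in> two_phase_outputs coin_class {copy_latent} xs ps.
            d_TV (joint_xy \<phi>h \<psi>h) (joint_xy (coin_at (1/2) 1) copy_latent) \<ge> 1/8)} = 1"
proof -
  have sample: "set xs \<subseteq> {1, 2} \<and> odd (length xs)"
    if "xs \<in> set_pmf (iid_pmf m (coin (1/2)))" for xs
    using set_pmf_iid_pmf[OF that] set_pmf_coin assms by auto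
  have far: "1/8 \<le> d_TV (joint_xy (coin_at p 2) copy_latent)
                        (joint_xy (coin_at (1/2) 1) copy_latent)" for p
    using d_TV_coin_at_ge[of 2 1 "1/2" p] by (simp add: joint_xy_coin_at_copy_latent)
  show ?thesis
    using far
    by (subst measure_pmf.prob_eq_1)
      (auto intro!: AE_pmfI dest!: sample simp: set_pair_pmf marg_x_coin_at two_phase_coin_class)
qed

lemma ex_odd_ge:
  fixes c :: real
  assumes "\<And>m n. odd m \<Longrightarrow> P m n"
  shows "\<exists>m n. c \<le> real m \<and> c \<le> real n \<and> P m n"
proof (intro exI conjI)
  show "c \<le> real (2 * nat \<lceil>c\<rceil> + 1)" and "c \<le> real (nat \<lceil>c\<rceil>)"
    using real_nat_ceiling_ge[of c] by simp_all
qed (simp add: assms)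

theorem mainTheorem18:
  shows "\<exists>(\<Phi> :: (nat \<times> nat) pmf set) (\<Psi> :: (nat \<Rightarrow> nat pmf) set) \<phi>s \<psi>s.
    \<phi>s \<in> \<Phi> \<and> \<psi>s \<in> \<Psi> \<and>
    (\<forall>\<phi>\<in>\<Phi>. set_pmf \<phi> \<subseteq> {0<..} \<times> {0<..}) \<and>
    (\<forall>\<psi>\<in>\<Psi>. \<forall>z. set_pmf (\<psi> z) \<subseteq> {0<..}) \<and>
    (\<forall>c::real. c > 0 \<longrightarrow>
      (\<exists>m n::nat. real m \<ge> c \<and> real n \<ge> c \<and>
        measure_pmf.prob
          (pair_pmf (iid_pmf m (marg_x \<phi>s)) (iid_pmf n (joint_xy \<phi>s \<psi>s)))
          {(xs, ps). two_phase_defined \<Phi> \<Psi> xs ps \<and>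
             (\<forall>(\<phi>h, \<psi>h) \<in> two_phase_outputs \<Phi> \<Psi> xs ps.
                d_TV (joint_xy \<phi>h \<psi>h) (joint_xy \<phi>s \<psi>s) \<ge> 1/8)}
        \<ge> (1/2) * (1 - exp (-1)) * exp (-1)))"
proof -
  have bound_le_one: "(1/2) * (1 - exp (-1)) * exp (-1) \<le> (1::real)"
    by (intro mult_le_one) (simp_all add: exp_le_one_iff)
  show ?thesis
  proof (intro exI[of _ coin_class] exI[of _ "{copy_latent}"] exI[of _ "coin_at (1/2) 1"]
      exI[of _ copy_latent] conjI allI impI)
    show "coin_at (1/2) 1 \<in> coin_class"
      by (simp add: coin_class_def)
    show "copy_latent \<in> {copy_latent}"
      by simp
    show "\<forall>\<phi>\<in>coin_class. set_pmf \<phi> \<subseteq> {0<..} \<times> {0<..}"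
      using set_pmf_coin_at by (fastforce simp: coin_class_def)
    show "\<forall>\<psi>\<in>{copy_latent}. \<forall>z. set_pmf (\<psi> z) \<subseteq> {0<..}"
      by (simp add: copy_latent_def less_max_iff_disj)
  qed (rule ex_odd_ge, subst two_phase_mle_fails_on_odd_samples, assumption, rule bound_le_one)
qed

end
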